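(* Let $H$ be a complex Hilbert space, $\varphi,\psi:[0,1]\to\mathbb{R}$ continuous, $A\in\mathbb{B}(H)$ and $t\in[0,1]$. Then $$\omega_t^2(\varphi,\psi;A)\le\big(|\varphi(t)|^2+|\psi(t)|^2\big)\omega^2(A)+|\varphi(t)\psi(t)|\,\omega(A^2)+\frac12|\varphi(t)\psi(t)|\,\|AA^*+A^*A\|.$$
   Context: $S_1(H)$ is the unit sphere of $H$, $\omega(T)=\sup_{x\in S_1(H)}|\langle Tx,x\rangle|$, and $\omega_t(\varphi,\psi;A)=\sup_{x\in S_1(H)}|\langle(\varphi(t)A+\psi(t)A^* )x,x\rangle|$. *)

theory Defs
  imports "HOL-Analysis.Analysis"
begin

class scaleC = scaleR +
  fixes scaleC :: "complex \<Rightarrow> 'a \<Rightarrow> 'a" (infixr \<open>*\<^sub>C\<close> 75)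
  assumes scaleR_scaleC: "scaleR r = scaleC (complex_of_real r)"

class complex_vector = scaleC + real_vector +
  assumes scaleC_add_right: "a *\<^sub>C (x + y) = a *\<^sub>C x + a *\<^sub>C y"
    and scaleC_add_left: "(a + b) *\<^sub>C x = a *\<^sub>C x + b *\<^sub>C x"
    and scaleC_scaleC: "a *\<^sub>C (b *\<^sub>C x) = (a * b) *\<^sub>C x"
    and scaleC_one: "1 *\<^sub>C x = x"

class complex_normed_vector = complex_vector + real_normed_vector +
  assumes norm_scaleC: "norm (a *\<^sub>C x) = cmod a * norm x"

class complex_inner = complex_normed_vector +
  fixes cinner :: "'a \<Rightarrow> 'a \<Rightarrow> complex"
  assumes cinner_commute: "cinner x y = cnj (cinner y x)"
    and cinner_add_left: "cinner (x + y) z = cinner x z + cinner y z"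
    and cinner_scaleC_left: "cinner (a *\<^sub>C x) y = a * cinner x y"
    and cinner_ge_zero: "0 \<le> Re (cinner x x)"
    and cinner_eq_zero_iff: "cinner x x = 0 \<longleftrightarrow> x = 0"
    and norm_eq_sqrt_cinner: "norm x = sqrt (Re (cinner x x))"

class chilbert_space = complex_inner + complete_space

definition bounded_clinear :: "('a::complex_normed_vector \<Rightarrow> 'b::complex_normed_vector) \<Rightarrow> bool" where
  "bounded_clinear f \<longleftrightarrow> bounded_linear f \<and> (\<forall>c x. f (c *\<^sub>C x) = c *\<^sub>C f x)"

definition is_adjoint :: "('a::complex_inner \<Rightarrow> 'a) \<Rightarrow> ('a \<Rightarrow> 'a) \<Rightarrow> bool" where
  "is_adjoint A B \<longleftrightarrow> (\<forall>x y. cinner (A x) y = cinner x (B y))"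

text \<open>Numerical radius \<open>\<omega>(T) = sup_{x \<in> S_1(H)} |<Tx,x>|\<close>; the 0 is inserted only so that
  the supremum is well defined for the trivial space (it does not change the value otherwise).\<close>
definition numrad :: "('a::complex_inner \<Rightarrow> 'a) \<Rightarrow> real" where
  "numrad T = Sup (insert 0 ((\<lambda>x. cmod (cinner (T x) x)) ` {x. norm x = 1}))"

text \<open>\<open>\<omega>_t(\<phi>,\<psi>;A) = \<omega>(\<phi>(t) A + \<psi>(t) A^*)\<close>, with \<open>Astar\<close> the adjoint of \<open>A\<close>.\<close>
definition omega_t :: "real \<Rightarrow> (real \<Rightarrow> real) \<Rightarrow> (real \<Rightarrow> real) \<Rightarrow> ('a::complex_inner \<Rightarrow> 'a) \<Rightarrow> ('a \<Rightarrow> 'a) \<Rightarrow> real" where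
  "omega_t t \<phi> \<psi> A Astar = numrad (\<lambda>x. complex_of_real (\<phi> t) *\<^sub>C A x + complex_of_real (\<psi> t) *\<^sub>C Astar x)"

end

theory Submission
  imports Defs
begin

text \<open>Write \<open>T = a A + b A\<^sup>*\<close> and \<open>z = \<langle>Ax, x\<rangle>\<close> for a unit vector \<open>x\<close>. Then
  \<open>\<langle>Tx, x\<rangle> = a z + b z\<^sup>*\<close>, so \<open>|\<langle>Tx, x\<rangle>|\<^sup>2 = (a\<^sup>2 + b\<^sup>2) |z|\<^sup>2 + 2ab Re(z\<^sup>2)\<close>.
  Since \<open>z\<^sup>2 = \<langle>Ax, x\<rangle> \<langle>x, A\<^sup>*x\<rangle>\<close>, Buzano's inequality gives
  \<open>2 |z\<^sup>2| \<le> |\<langle>A\<^sup>2x, x\<rangle>| + \<parallel>Ax\<parallel> \<parallel>A\<^sup>*x\<parallel>\<close>, and by AM-GM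
  \<open>2 \<parallel>Ax\<parallel> \<parallel>A\<^sup>*x\<parallel> \<le> \<parallel>Ax\<parallel>\<^sup>2 + \<parallel>A\<^sup>*x\<parallel>\<^sup>2 = \<langle>(AA\<^sup>* + A\<^sup>*A)x, x\<rangle>\<close>.
  Taking the supremum over unit vectors gives the bound.\<close>

lemma additive_cinner_left: "Modules.additive (\<lambda>x. cinner x y)"
  by (simp add: Modules.additive_def cinner_add_left)

lemma cinner_add_right: "cinner x (y + z) = cinner x y + cinner x z"
  by (metis cinner_add_left cinner_commute complex_cnj_add)

lemma additive_cinner_right: "Modules.additive (\<lambda>y. cinner x y)"
  by (simp add: Modules.additive_def cinner_add_right)

lemmas cinner_diff_left = Modules.additive.diff [OF additive_cinner_left]
  and cinner_zero_right [simp] = Modules.additive.zero [OF additive_cinner_right]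
  and cinner_diff_right = Modules.additive.diff [OF additive_cinner_right]

lemma cinner_scaleC_right: "cinner x (a *\<^sub>C y) = cnj a * cinner x y"
  by (metis cinner_commute cinner_scaleC_left complex_cnj_mult)

lemma cinner_self: "cinner x x = complex_of_real ((norm x)\<^sup>2)"
proof -
  have "Im (cinner x x) = 0"
    using cinner_commute [of x x] by (metis cnj.simps(2) neg_equal_zero)
  then show ?thesis
    by (simp add: complex_eq_iff norm_eq_sqrt_cinner cinner_ge_zero)
qed

lemma Re_cinner_self: "Re (cinner x x) = (norm x)\<^sup>2"
  by (simp add: cinner_self)

lemma cinner_eq_rightI: "(\<And>u. cinner u x = cinner u y) \<Longrightarrow> x = y"
  by (metis cinner_diff_right cinner_eq_zero_iff eq_iff_diff_eq_0)

lemma Cauchy_Schwarz_cinner: "cmod (cinner x y) \<le> norm x * norm y"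
proof (cases "y = 0")
  case False
  define w where "w = cinner x y"
  define r where "r = (norm y)\<^sup>2"
  have r: "r > 0" using False by (simp add: r_def)
  \<comment> \<open>the vector \<open>r x - w y\<close> avoids dividing by \<open>\<parallel>y\<parallel>\<^sup>2\<close>\<close>
  define v where "v = complex_of_real r *\<^sub>C x - w *\<^sub>C y"
  have "cinner v v = complex_of_real r * (complex_of_real r * cinner x x - cnj w * w)"
  proof -
    have "cinner y x = cnj w" "cinner y y = complex_of_real r"
      by (simp_all add: w_def r_def cinner_self flip: cinner_commute)
    then show ?thesis
      unfolding v_def cinner_diff_left cinner_diff_right cinner_scaleC_left cinner_scaleC_right
        w_def [symmetric]
      by (simp add: algebra_simps)
  qed
  also have "\<dots> = complex_of_real (r * (r * (norm x)\<^sup>2 - (cmod w)\<^sup>2))"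
  proof -
    have "cnj w * w = complex_of_real ((cmod w)\<^sup>2)" by (metis complex_norm_square mult.commute)
    then show ?thesis by (simp add: cinner_self)
  qed
  finally have "cinner v v = complex_of_real (r * (r * (norm x)\<^sup>2 - (cmod w)\<^sup>2))" .
  then have "0 \<le> r * (r * (norm x)\<^sup>2 - (cmod w)\<^sup>2)"
    using cinner_ge_zero [of v] by simp
  then have "(cmod w)\<^sup>2 \<le> r * (norm x)\<^sup>2"
    using r by (simp add: zero_le_mult_iff)
  also have "\<dots> = (norm x * norm y)\<^sup>2"
    by (simp add: r_def power_mult_distrib)
  finally show ?thesis
    unfolding w_def by (rule power2_le_imp_le) simp
qed simp

lemma adjoint_bounded_linear:
  assumes A: "bounded_linear A" and adj: "is_adjoint A B"
  shows "bounded_linear B"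
proof -
  have adj': "\<And>u y. cinner (A u) y = cinner u (B y)"
    using adj unfolding is_adjoint_def by blast
  have add: "B (y + z) = B y + B z" for y z
    by (rule cinner_eq_rightI) (simp add: cinner_add_right flip: adj')
  have scale: "B (r *\<^sub>R y) = r *\<^sub>R B y" for r y
    by (rule cinner_eq_rightI) (simp add: scaleR_scaleC cinner_scaleC_right flip: adj')
  obtain K where K: "K > 0" "\<And>x. norm (A x) \<le> norm x * K"
    using bounded_linear.pos_bounded [OF A] by blast
  have "norm (B y) \<le> norm y * K" for y
  proof -
    have "(norm (B y))\<^sup>2 = Re (cinner (A (B y)) y)" by (simp add: adj' Re_cinner_self)
    also have "\<dots> \<le> norm (A (B y)) * norm y"
      using complex_Re_le_cmod Cauchy_Schwarz_cinner order_trans by blast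
    also have "\<dots> \<le> norm (B y) * (norm y * K)"
      using mult_right_mono [OF K(2) [of "B y"] norm_ge_zero [of y]] by (simp add: ac_simps)
    finally show ?thesis
      using K(1) by (cases "norm (B y) = 0") (auto simp: power2_eq_square)
  qed
  then show ?thesis by (rule bounded_linear_intro [OF add scale])
qed

lemma Buzano_inequality:
  assumes "norm e = 1"
  shows "2 * cmod (cinner a e * cinner e b) \<le> cmod (cinner a b) + norm a * norm b"
proof -
  define c where "c = cinner a e"
  \<comment> \<open>the reflection of \<open>a\<close> in the line through \<open>e\<close>, an isometry\<close>
  define v where "v = (2 * c) *\<^sub>C e - a"
  have "cinner e a = cnj c" "cinner e e = 1"
    using assms by (simp_all add: c_def cinner_self flip: cinner_commute)
  then have "cinner v v = cinner a a"
    unfolding v_def cinner_diff_left cinner_diff_right cinner_scaleC_left cinner_scaleC_right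
      c_def [symmetric]
    by (simp add: algebra_simps)
  then have norm_v: "norm v = norm a" by (simp add: norm_eq_sqrt_cinner)
  have "2 * cmod (c * cinner e b) = cmod (cinner v b + cinner a b)"
    by (simp add: v_def cinner_diff_left cinner_scaleC_left norm_mult)
  also have "\<dots> \<le> norm a * norm b + cmod (cinner a b)"
    using norm_triangle_ineq [of "cinner v b" "cinner a b"] Cauchy_Schwarz_cinner [of v b, unfolded norm_v]
    by linarith
  finally show ?thesis unfolding c_def by simp
qed

lemma cinner_le_onorm:
  assumes "bounded_linear T" "norm x = 1"
  shows "cmod (cinner (T x) x) \<le> onorm T"
  using Cauchy_Schwarz_cinner [of "T x" x] onorm [OF assms(1), of x] assms(2) by simp

lemma bdd_above_numrad:
  "bounded_linear T \<Longrightarrow> bdd_above (insert 0 ((\<lambda>x. cmod (cinner (T x) x)) ` {x. norm x = 1}))"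
  using cinner_le_onorm by (intro bdd_aboveI [where M = "max 0 (onorm T)"]) force

lemma cinner_le_numrad: "bounded_linear T \<Longrightarrow> norm x = 1 \<Longrightarrow> cmod (cinner (T x) x) \<le> numrad T"
  unfolding numrad_def by (rule cSup_upper [OF _ bdd_above_numrad]) auto

lemma numrad_nonneg: "bounded_linear T \<Longrightarrow> 0 \<le> numrad T"
  unfolding numrad_def by (rule cSup_upper [OF _ bdd_above_numrad]) auto

lemma numrad_power2_le:
  assumes "0 \<le> B" and bound: "\<And>x. norm x = 1 \<Longrightarrow> (cmod (cinner (T x) x))\<^sup>2 \<le> B"
  shows "(numrad T)\<^sup>2 \<le> B"
proof -
  have sqrt_bound: "cmod (cinner (T x) x) \<le> sqrt B" if "norm x = 1" for x
    using bound [OF that] by (rule real_le_rsqrt)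
  have "numrad T \<le> sqrt B"
    unfolding numrad_def using sqrt_bound assms(1) by (intro cSup_least) auto
  moreover have "0 \<le> numrad T"
  proof -
    have "bdd_above (insert 0 ((\<lambda>x. cmod (cinner (T x) x)) ` {x. norm x = 1}))"
      using sqrt_bound assms(1) by (intro bdd_aboveI [where M = "sqrt B"]) auto
    then show ?thesis unfolding numrad_def by (rule cSup_upper [rotated]) simp
  qed
  ultimately have "(numrad T)\<^sup>2 \<le> (sqrt B)\<^sup>2" by (rule power_mono)
  with assms(1) show ?thesis by simp
qed

lemma cmod_add_cnj_power2:
  "(cmod (complex_of_real a * z + complex_of_real b * cnj z))\<^sup>2
    = (a\<^sup>2 + b\<^sup>2) * (cmod z)\<^sup>2 + 2 * a * b * Re (z * z)"
  unfolding cmod_power2 by (simp add: power2_eq_square algebra_simps)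

lemma norm_power2_eq_adjoint:
  assumes "is_adjoint A B"
  shows "(norm (A x))\<^sup>2 = Re (cinner (B (A x)) x)"
    and "(norm (B x))\<^sup>2 = Re (cinner (A (B x)) x)"
proof -
  have "(norm (A x))\<^sup>2 = Re (cnj (cinner (B (A x)) x))"
    using assms unfolding is_adjoint_def by (metis Re_cinner_self cinner_commute)
  then show "(norm (A x))\<^sup>2 = Re (cinner (B (A x)) x)" by simp
  show "(norm (B x))\<^sup>2 = Re (cinner (A (B x)) x)"
    using assms unfolding is_adjoint_def by (simp add: Re_cinner_self)
qed

lemma bounded_linear_adjoint_products_sum:
  assumes A: "bounded_linear A" and adj: "is_adjoint A B"
  shows "bounded_linear (\<lambda>x. A (B x) + B (A x))"
proof -
  have B: "bounded_linear B" using A adj by (rule adjoint_bounded_linear)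
  show ?thesis
    using bounded_linear_compose [OF A B] bounded_linear_compose [OF B A]
    by (rule bounded_linear_add)
qed

lemma norm_mult_norm_adjoint_le:
  assumes "bounded_linear A" "is_adjoint A B" "norm x = 1"
  shows "2 * (norm (A x) * norm (B x)) \<le> onorm (\<lambda>x. A (B x) + B (A x))"
proof -
  let ?S = "\<lambda>x. A (B x) + B (A x)"
  have "bounded_linear ?S"
    using assms(1,2) by (rule bounded_linear_adjoint_products_sum)
  have "2 * (norm (A x) * norm (B x)) \<le> (norm (A x))\<^sup>2 + (norm (B x))\<^sup>2"
    using sum_squares_bound [of "norm (A x)" "norm (B x)"] by (simp add: mult.assoc)
  also have "\<dots> = Re (cinner (?S x) x)"
    by (simp add: norm_power2_eq_adjoint [OF assms(2)] cinner_add_left)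
  also have "\<dots> \<le> cmod (cinner (?S x) x)" by (rule complex_Re_le_cmod)
  also have "\<dots> \<le> onorm ?S" using \<open>bounded_linear ?S\<close> assms(3) by (rule cinner_le_onorm)
  finally show ?thesis .
qed

lemma cmod_cinner_power2_le:
  assumes "is_adjoint A B" "norm x = 1"
  shows "2 * cmod ((cinner (A x) x)\<^sup>2) \<le> cmod (cinner (A (A x)) x) + norm (A x) * norm (B x)"
  using Buzano_inequality [OF assms(2), of "A x" "B x"] assms(1)
  by (simp add: is_adjoint_def power2_eq_square)

lemma numrad_real_combination_adjoint_power2_le:
  fixes A B :: "'a::complex_inner \<Rightarrow> 'a" and a b :: real
  assumes A: "bounded_linear A" and adj: "is_adjoint A B"
  shows "(numrad (\<lambda>x. complex_of_real a *\<^sub>C A x + complex_of_real b *\<^sub>C B x))\<^sup>2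
    \<le> (a\<^sup>2 + b\<^sup>2) * (numrad A)\<^sup>2 + \<bar>a * b\<bar> * numrad (A \<circ> A)
      + 1/2 * \<bar>a * b\<bar> * onorm (\<lambda>x. A (B x) + B (A x))"
    (is "(numrad ?T)\<^sup>2 \<le> ?R")
proof (rule numrad_power2_le)
  have AA: "bounded_linear (A \<circ> A)"
    using bounded_linear_compose [OF A A] by (simp add: comp_def)
  show "0 \<le> ?R"
    using numrad_nonneg [OF A] numrad_nonneg [OF AA]
      onorm_pos_le [OF bounded_linear_adjoint_products_sum [OF A adj]] by simp
  fix x :: 'a
  assume x: "norm x = 1"
  define z where "z = cinner (A x) x"
  have "cinner (?T x) x = complex_of_real a * z + complex_of_real b * cnj z"
    using adj by (simp add: cinner_add_left cinner_scaleC_left z_def is_adjoint_def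
        flip: cinner_commute)
  then have "(cmod (cinner (?T x) x))\<^sup>2 = (a\<^sup>2 + b\<^sup>2) * (cmod z)\<^sup>2 + 2 * a * b * Re (z * z)"
    by (simp add: cmod_add_cnj_power2)
  also have "\<dots> \<le> (a\<^sup>2 + b\<^sup>2) * (numrad A)\<^sup>2 + \<bar>a * b\<bar> * (2 * cmod (z\<^sup>2))"
  proof (rule add_mono)
    show "(a\<^sup>2 + b\<^sup>2) * (cmod z)\<^sup>2 \<le> (a\<^sup>2 + b\<^sup>2) * (numrad A)\<^sup>2"
      using cinner_le_numrad [OF A x] by (simp add: z_def mult_left_mono power_mono)
    have "2 * a * b * Re (z * z) \<le> \<bar>2 * a * b * Re (z * z)\<bar>" by (rule abs_ge_self)
    also have "\<dots> = \<bar>a * b\<bar> * (2 * \<bar>Re (z * z)\<bar>)" by (simp add: abs_mult)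
    also have "\<dots> \<le> \<bar>a * b\<bar> * (2 * cmod (z\<^sup>2))"
      by (intro mult_left_mono) (simp_all add: abs_Re_le_cmod power2_eq_square del: times_complex.sel)
    finally show "2 * a * b * Re (z * z) \<le> \<bar>a * b\<bar> * (2 * cmod (z\<^sup>2))" .
  qed
  also have "\<dots> \<le> ?R"
  proof -
    have "2 * cmod (z\<^sup>2) \<le> numrad (A \<circ> A) + 1/2 * onorm (\<lambda>x. A (B x) + B (A x))"
      using cmod_cinner_power2_le [OF adj x] cinner_le_numrad [OF AA x]
        norm_mult_norm_adjoint_le [OF A adj x]
      by (simp add: z_def)
    from mult_left_mono [OF this abs_ge_zero [of "a * b"]] show ?thesis
      by (simp add: algebra_simps)
  qed
  finally show "(cmod (cinner (?T x) x))\<^sup>2 \<le> ?R" .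
qed

theorem theorem3p11:
  fixes A Astar :: "'a::chilbert_space \<Rightarrow> 'a"
    and \<phi> \<psi> :: "real \<Rightarrow> real" and t :: real
  assumes "continuous_on {0..1} \<phi>" and "continuous_on {0..1} \<psi>"
    and "bounded_clinear A" and "is_adjoint A Astar"
    and "t \<in> {0..1}"
  shows "(omega_t t \<phi> \<psi> A Astar)\<^sup>2
    \<le> (\<bar>\<phi> t\<bar>\<^sup>2 + \<bar>\<psi> t\<bar>\<^sup>2) * (numrad A)\<^sup>2 + \<bar>\<phi> t * \<psi> t\<bar> * numrad (A \<circ> A)
      + 1/2 * \<bar>\<phi> t * \<psi> t\<bar> * onorm (\<lambda>x. A (Astar x) + Astar (A x))"
  using numrad_real_combination_adjoint_power2_le [of A Astar "\<phi> t" "\<psi> t"] assms(3,4)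
  by (simp add: omega_t_def bounded_clinear_def)

end
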